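(* Let $(s_n)_{n\ge1}$ be a sequence of positive real numbers with $\lim_{n\to\infty} s_n/n=\infty$. Then there exists an irrational $\beta\in\mathbb R\setminus\mathbb Q$ such that the rotation $T(x)=x+\beta \pmod 1$ of $[0,1)$ satisfies \[\liminf_{n\to\infty} s_n\,\|T^n(x)-y\|=\infty\quad\text{for } \lambda\times\lambda\text{-almost every }(x,y)\in[0,1)^2,\] where $\lambda$ is Lebesgue measure.
   Context: $\|t\|=\min_{m\in\mathbb Z}|t-m|$ denotes the distance from $t\in\mathbb R$ to the nearest integer (the circle metric on $[0,1)$). *)

theory Defs
  imports "HOL-Analysis.Analysis"
begin

definition circ_norm :: "real \<Rightarrow> real" where
  "circ_norm t = (INF m::int. \<bar>t - of_int m\<bar>)"

definition rot :: "real \<Rightarrow> real \<Rightarrow> real" where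
  "rot \<beta> x = frac (x + \<beta>)"

end

theory Submission
  imports Defs
begin

text \<open>
  Take \<open>\<beta> = \<Sum>k. 1/q k\<close> for a chain of integers \<open>q 0 dvd q 1 dvd \<dots>\<close> growing so fast
  that \<open>q m\<close> times the \<open>m\<close>-th partial sum is an integer while \<open>q m\<close> times the tail is
  tiny. Liouville's argument makes \<open>\<beta>\<close> irrational, and
  \<open>circ_norm (z + n\<beta>) \<ge> circ_norm (q m z) / q m - 2n / q (m+1)\<close>.
  By Borel--Cantelli, for almost every \<open>z = x - y\<close> eventually
  \<open>circ_norm (q m z) \<ge> 1/2^(m+1)\<close>. Writing \<open>q m = L m * q (m-1) * 2^(m+2)\<close>, on the block
  \<open>L m \<le> n < L (m+1)\<close> this gives \<open>circ_norm (z + n\<beta>) \<ge> 1/(q m 2^(m+2))\<close>, and \<open>L m\<close> is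
  chosen, using \<open>s n / n \<longrightarrow> \<infinity>\<close>, so large that \<open>s n \<ge> m 2^(m+2) q m\<close> on the block.
  Hence \<open>s n * circ_norm (T^n x - y) \<ge> m\<close> there.
\<close>

lemma circ_norm_eq_abs_round: "circ_norm t = \<bar>t - of_int (round t)\<bar>"
  unfolding circ_norm_def
proof (rule antisym)
  show "(INF m::int. \<bar>t - of_int m\<bar>) \<le> \<bar>t - of_int (round t)\<bar>"
    by (rule cINF_lower) (auto intro: bdd_belowI[of _ 0])
  show "\<bar>t - of_int (round t)\<bar> \<le> (INF m::int. \<bar>t - of_int m\<bar>)"
    by (rule cINF_greatest) (auto simp: round_diff_minimal)
qed

lemma circ_norm_le: "circ_norm t \<le> \<bar>t - of_int m\<bar>"
  by (simp add: circ_norm_eq_abs_round round_diff_minimal)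

lemma circ_norm_add_of_int [simp]: "circ_norm (t + of_int m) = circ_norm t"
proof (rule antisym)
  show "circ_norm (t + of_int m) \<le> circ_norm t"
    using circ_norm_le[of "t + of_int m" "round t + m"] by (simp add: circ_norm_eq_abs_round)
  show "circ_norm t \<le> circ_norm (t + of_int m)"
    using circ_norm_le[of t "round (t + of_int m) - m"] by (simp add: circ_norm_eq_abs_round)
qed

lemma circ_norm_add_ge: "circ_norm a - \<bar>b\<bar> \<le> circ_norm (a + b)"
  using circ_norm_le[of a "round (a + b)"] by (simp add: circ_norm_eq_abs_round)

lemma circ_norm_of_nat_mult_le: "circ_norm (of_nat q * t) \<le> of_nat q * circ_norm t"
proof -
  have "circ_norm (of_nat q * t) \<le> \<bar>of_nat q * t - of_int (int q * round t)\<bar>"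
    by (rule circ_norm_le)
  also have "\<dots> = of_nat q * \<bar>t - of_int (round t)\<bar>"
    by (simp add: abs_mult right_diff_distrib[symmetric])
  finally show ?thesis by (simp add: circ_norm_eq_abs_round)
qed

lemma continuous_on_circ_norm: "continuous_on A circ_norm"
proof (rule lipschitz_on_continuous_on)
  show "1-lipschitz_on A circ_norm"
  proof (rule lipschitz_onI)
    fix a b
    show "dist (circ_norm a) (circ_norm b) \<le> 1 * dist a b"
      using circ_norm_add_ge[of a "b - a"] circ_norm_add_ge[of b "a - b"]
      by (simp add: dist_real_def)
  qed simp
qed

lemma borel_measurable_circ_norm [measurable]: "circ_norm \<in> borel_measurable borel"
  by (intro borel_measurable_continuous_onI continuous_on_circ_norm)

lemma rot_funpow: "\<exists>i::int. (rot b ^^ n) x = x + real n * b + of_int i"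
proof (induction n)
  case 0 show ?case by (auto intro: exI[of _ 0])
next
  case (Suc n)
  then obtain i where "(rot b ^^ n) x = x + real n * b + of_int i" by blast
  then have "(rot b ^^ Suc n) x
      = x + real (Suc n) * b + of_int (i - \<lfloor>x + real n * b + of_int i + b\<rfloor>)"
    by (simp add: rot_def frac_def algebra_simps)
  then show ?case by blast
qed

lemma circ_norm_rot_funpow: "circ_norm ((rot b ^^ n) x - y) = circ_norm (x - y + real n * b)"
proof -
  obtain i where "(rot b ^^ n) x = x + real n * b + of_int i" using rot_funpow by blast
  then have "(rot b ^^ n) x - y = (x - y + real n * b) + of_int i" by simp
  then show ?thesis by (metis circ_norm_add_of_int)
qed

locale lacunary_divisor_chain =
  fixes q :: "nat \<Rightarrow> nat"
  assumes pos_0: "0 < q 0"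
    and dvd_Suc: "q k dvd q (Suc k)"
    and growth: "2 ^ Suc k * q k \<le> q (Suc k)"
begin

definition sum_recip :: real where
  "sum_recip = (\<Sum>k. 1 / real (q k))"

lemma pos: "0 < q k"
proof (induction k)
  case (Suc k)
  then show ?case
    using growth[of k] by (metis less_le_trans nat_0_less_mult_iff zero_less_power zero_less_numeral)
qed (rule pos_0)

lemma double_le: "2 * q k \<le> q (Suc k)"
  using growth[of k] order_trans[OF mult_le_mono1[of 2 "2 ^ Suc k" "q k"]] by simp

lemma dvd: "j \<le> k \<Longrightarrow> q j dvd q k"
proof (induction k)
  case (Suc k)
  then show ?case using dvd_Suc[of k] by (auto simp: le_Suc_eq intro: dvd_trans)
qed simp

lemma recip_shift_le: "1 / real (q (j + i)) \<le> (1/2) ^ i / real (q j)"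
proof -
  have "2 ^ i * q j \<le> q (j + i)"
  proof (induction i)
    case (Suc i)
    then show ?case using double_le[of "j + i"] by simp
  qed simp
  then have "2 ^ i * real (q j) \<le> real (q (j + i))"
    by (metis of_nat_le_iff of_nat_mult of_nat_numeral of_nat_power)
  then show ?thesis using pos[of j] pos[of "j + i"] by (simp add: field_simps)
qed

lemma summable_recip_shift: "summable (\<lambda>k. 1 / real (q (k + j)))"
  by (rule summable_comparison_test'[where g = "\<lambda>k. (1/2) ^ k / real (q j)"])
    (use recip_shift_le[of j] in \<open>auto simp: add.commute intro: summable_divide summable_geometric\<close>)

lemma sum_recip_split:
  "sum_recip = (\<Sum>k<Suc m. 1 / real (q k)) + (\<Sum>k. 1 / real (q (k + Suc m)))"
  using suminf_split_initial_segment[OF summable_recip_shift[of 0], of "Suc m"]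
  by (simp add: sum_recip_def)

lemma tail_pos: "0 < (\<Sum>k. 1 / real (q (k + Suc m)))"
  by (rule suminf_pos[OF summable_recip_shift]) (simp add: pos)

lemma tail_le: "(\<Sum>k. 1 / real (q (k + Suc m))) \<le> 2 / real (q (Suc m))"
proof -
  have "(\<Sum>k. 1 / real (q (k + Suc m))) \<le> (\<Sum>k. (1/2) ^ k / real (q (Suc m)))"
    by (rule suminf_le[OF _ summable_recip_shift summable_divide[OF summable_geometric]])
      (use recip_shift_le[of "Suc m"] in \<open>auto simp: add.commute\<close>)
  also have "\<dots> = 2 / real (q (Suc m))"
    using suminf_divide[OF summable_geometric[of "1/2::real"]] suminf_geometric[of "1/2::real"]
    by simp
  finally show ?thesis .
qed

lemma partial_sum_scaled_Ints: "real (q m) * (\<Sum>k<Suc m. 1 / real (q k)) \<in> \<int>"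
proof -
  have "real (q m) * (\<Sum>k<Suc m. 1 / real (q k)) = (\<Sum>k<Suc m. real (q m div q k))"
    unfolding sum_distrib_left
    by (intro sum.cong) (auto simp: real_of_nat_div dvd pos)
  then show ?thesis by (metis Ints_of_nat of_nat_sum)
qed

lemma circ_norm_add_mult_sum_recip_ge:
  "circ_norm (real (q m) * z) / real (q m) - 2 * real n / real (q (Suc m))
     \<le> circ_norm (z + real n * sum_recip)"
proof -
  define S where "S = (\<Sum>k<Suc m. 1 / real (q k))"
  define e where "e = (\<Sum>k. 1 / real (q (k + Suc m)))"
  have qm: "real (q m) > 0" using pos[of m] by simp
  obtain P where P: "real (q m) * S = of_int P"
    using partial_sum_scaled_Ints[of m] unfolding S_def by (auto elim: Ints_cases)
  have "real (q m) * (z + real n * S) = real (q m) * z + real n * (real (q m) * S)"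
    by (simp add: algebra_simps)
  then have "circ_norm (real (q m) * z) = circ_norm (real (q m) * (z + real n * S))"
    using P circ_norm_add_of_int[of "real (q m) * z" "int n * P"] by simp
  also have "\<dots> \<le> real (q m) * circ_norm (z + real n * S)"
    by (rule circ_norm_of_nat_mult_le)
  finally have "circ_norm (real (q m) * z) / real (q m) \<le> circ_norm (z + real n * S)"
    using qm by (simp add: field_simps)
  moreover have "circ_norm (z + real n * S) - \<bar>real n * e\<bar> \<le> circ_norm (z + real n * sum_recip)"
    using circ_norm_add_ge[of "z + real n * S" "real n * e"] sum_recip_split[of m]
    by (simp add: S_def e_def algebra_simps)
  moreover have "\<bar>real n * e\<bar> \<le> 2 * real n / real (q (Suc m))"
    using tail_pos[of m] mult_left_mono[OF tail_le[of m], of "real n"] by (simp add: e_def mult.commute)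
  ultimately show ?thesis by linarith
qed

lemma sum_recip_irrational: "sum_recip \<notin> \<rat>"
proof
  assume "sum_recip \<in> \<rat>"
  then obtain a :: int and b :: nat where b: "b > 0" and ab: "sum_recip = of_int a / of_nat b"
    by (metis Rats_cases' of_int_of_nat_eq zero_less_imp_eq_int)
  define e where "e = (\<Sum>k. 1 / real (q (k + Suc b)))"
  define x where "x = real b * real (q b) * e"
  have qb: "real (q b) > 0" using pos[of b] by simp
  have "x = of_int (a * int (q b)) - real b * (real (q b) * (\<Sum>k<Suc b. 1 / real (q k)))"
    using sum_recip_split[of b] b unfolding x_def e_def ab by (simp add: field_simps)
  then have "x \<in> \<int>" using partial_sum_scaled_Ints[of b] by simp
  moreover have "x > 0" using b qb tail_pos[of b] by (simp add: x_def e_def)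
  moreover have "x < 1"
  proof -
    have "x \<le> real b * real (q b) * (2 / real (q (Suc b)))"
      unfolding x_def e_def using tail_le[of b] by (intro mult_left_mono) auto
    also have "\<dots> \<le> real b * real (q b) * (2 / (2 ^ Suc b * real (q b)))"
    proof -
      have "2 ^ Suc b * real (q b) \<le> real (q (Suc b))"
        using growth[of b] by (metis of_nat_le_iff of_nat_mult of_nat_numeral of_nat_power)
      then show ?thesis using qb pos[of "Suc b"] by (intro mult_left_mono divide_left_mono) auto
    qed
    also have "\<dots> = real b / 2 ^ b" using qb by (simp add: field_simps)
    also have "\<dots> < 1" using of_nat_less_two_power[of b] by simp
    finally show ?thesis .
  qed
  ultimately show False by (metis Ints_cases of_int_0_less_iff of_int_less_1_iff not_le zero_less_iff_neq_zero int_one_le_iff_zero_less)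
qed

end

lemma emeasure_UN_ball_le:
  fixes c :: "'i \<Rightarrow> real"
  assumes "finite I" "0 \<le> r"
  shows "emeasure lborel (\<Union>i\<in>I. ball (c i) r) \<le> ennreal (real (card I) * (2 * r))"
proof -
  have "emeasure lborel (\<Union>i\<in>I. ball (c i) r) \<le> (\<Sum>i\<in>I. emeasure lborel (ball (c i) r))"
    using assms by (intro emeasure_subadditive_finite) auto
  also have "\<dots> = (\<Sum>i\<in>I. ennreal (2 * r))"
    using assms by (intro sum.cong) (auto simp: ball_eq_greaterThanLessThan)
  finally show ?thesis using assms by (simp add: ennreal_of_nat_eq_real_of_nat ennreal_mult)
qed

definition grid_balls :: "real \<Rightarrow> nat \<Rightarrow> real \<Rightarrow> real set" where
  "grid_balls x q \<epsilon> = (\<Union>j\<in>{- int q - 1 .. int q + 1}. ball (x - of_int j / real q) (\<epsilon> / real q))"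

lemma grid_balls_sets: "grid_balls x q \<epsilon> \<in> sets borel"
proof -
  have "open (grid_balls x q \<epsilon>)" unfolding grid_balls_def by (intro open_UN) auto
  then show ?thesis by simp
qed

lemma emeasure_grid_balls_le:
  assumes "0 < q" "0 \<le> \<epsilon>"
  shows "emeasure lborel (grid_balls x q \<epsilon>) \<le> ennreal (10 * \<epsilon>)"
proof -
  have "emeasure lborel (grid_balls x q \<epsilon>) \<le> ennreal ((2 * real q + 3) * (2 * (\<epsilon> / real q)))"
    using emeasure_UN_ball_le[of "{- int q - 1 .. int q + 1}" "\<epsilon> / real q"
        "\<lambda>j. x - of_int j / real q"] assms
    unfolding grid_balls_def by (simp add: algebra_simps)
  also have "\<dots> \<le> ennreal (10 * \<epsilon>)"
    using assms mult_left_mono[of 1 "real q" \<epsilon>] by (intro ennreal_leI) (simp add: field_simps)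
  finally show ?thesis .
qed

lemma circ_norm_less_imp_mem_grid_balls:
  assumes "0 < q" "\<bar>x - y\<bar> < 1" "circ_norm (real q * (x - y)) < \<epsilon>"
  shows "y \<in> grid_balls x q \<epsilon>"
proof -
  define j where "j = round (real q * (x - y))"
  have close: "\<bar>real q * (x - y) - of_int j\<bar> < \<epsilon>"
    using assms(3) by (simp add: circ_norm_eq_abs_round j_def)
  have "\<bar>real q * (x - y) - of_int j\<bar> \<le> 1/2"
    unfolding j_def using of_int_round_abs_le by (simp add: abs_minus_commute)
  moreover have "\<bar>real q * (x - y)\<bar> < real q"
    using assms(1,2) by (simp add: abs_mult)
  ultimately have "\<bar>real_of_int j\<bar> < real q + 1" by linarith
  then have "real_of_int \<bar>j\<bar> < real_of_int (int q + 1)" by simp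
  then have "\<bar>j\<bar> < int q + 1" by (simp only: of_int_less_iff)
  then have "j \<in> {- int q - 1 .. int q + 1}" by auto
  moreover have "dist y (x - of_int j / real q) < \<epsilon> / real q"
  proof -
    have "dist y (x - of_int j / real q) = \<bar>real q * (x - y) - of_int j\<bar> / real q"
      using assms(1) by (simp add: dist_real_def field_simps abs_div[symmetric] abs_minus_commute)
    then show ?thesis using close assms(1) by (simp add: divide_strict_right_mono)
  qed
  ultimately show ?thesis unfolding grid_balls_def by (auto simp: dist_commute)
qed

lemma AE_eventually_circ_norm_ge_section:
  fixes q :: "nat \<Rightarrow> nat" and \<epsilon> :: "nat \<Rightarrow> real"
  assumes q: "\<And>m. 0 < q m" and \<epsilon>: "\<And>m. 0 \<le> \<epsilon> m" "summable \<epsilon>"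
  shows "AE y in lborel. \<forall>\<^sub>F m in sequentially.
           \<bar>x - y\<bar> < 1 \<longrightarrow> \<epsilon> m \<le> circ_norm (real (q m) * (x - y))"
proof -
  have "AE y in lborel. \<forall>\<^sub>F m in sequentially. y \<in> space lborel - grid_balls x (q m) (\<epsilon> m)"
  proof (rule borel_cantelli_AE1)
    show "emeasure lborel (grid_balls x (q m) (\<epsilon> m)) < \<infinity>" for m
      using emeasure_grid_balls_le[OF q[of m] \<epsilon>(1)[of m], of x] by (simp add: le_less_trans)
    show "summable (\<lambda>m. measure lborel (grid_balls x (q m) (\<epsilon> m)))"
    proof (rule summable_comparison_test')
      show "summable (\<lambda>m. 10 * \<epsilon> m)" using \<epsilon>(2) by (rule summable_mult)
      show "norm (measure lborel (grid_balls x (q m) (\<epsilon> m))) \<le> 10 * \<epsilon> m" for m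
        using enn2real_mono[OF emeasure_grid_balls_le[OF q[of m] \<epsilon>(1)[of m], of x]] \<epsilon>(1)[of m]
        by (simp add: measure_def)
    qed
  qed (simp add: grid_balls_sets)
  then show ?thesis
  proof (rule eventually_mono)
    fix y assume "\<forall>\<^sub>F m in sequentially. y \<in> space lborel - grid_balls x (q m) (\<epsilon> m)"
    then show "\<forall>\<^sub>F m in sequentially. \<bar>x - y\<bar> < 1 \<longrightarrow> \<epsilon> m \<le> circ_norm (real (q m) * (x - y))"
    proof (rule eventually_mono, intro impI)
      fix m assume y: "y \<in> space lborel - grid_balls x (q m) (\<epsilon> m)" and xy: "\<bar>x - y\<bar> < 1"
      show "\<epsilon> m \<le> circ_norm (real (q m) * (x - y))"
        using y circ_norm_less_imp_mem_grid_balls[OF q[of m] xy, of "\<epsilon> m"] by (auto intro!: leI)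
    qed
  qed
qed

lemma AE_eventually_circ_norm_ge:
  fixes q :: "nat \<Rightarrow> nat" and \<epsilon> :: "nat \<Rightarrow> real"
  assumes "\<And>m. 0 < q m" "\<And>m. 0 \<le> \<epsilon> m" "summable \<epsilon>"
  shows "AE p in lborel \<Otimes>\<^sub>M lborel. \<forall>\<^sub>F m in sequentially.
           \<bar>fst p - snd p\<bar> < 1 \<longrightarrow> \<epsilon> m \<le> circ_norm (real (q m) * (fst p - snd p))"
proof -
  define good where "good p \<longleftrightarrow> (\<forall>\<^sub>F m in sequentially.
      \<bar>fst p - snd p\<bar> < 1 \<longrightarrow> \<epsilon> m \<le> circ_norm (real (q m) * (fst p - snd p)))" for p
  have "{p \<in> space (lborel \<Otimes>\<^sub>M lborel). good p} \<in> sets (lborel \<Otimes>\<^sub>M lborel)"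
    unfolding good_def eventually_sequentially by measurable
  moreover have "AE x in lborel. AE y in lborel. good (x, y)"
    unfolding good_def using AE_eventually_circ_norm_ge_section[OF assms] by simp
  moreover have "pair_sigma_finite lborel lborel"
    by (simp add: pair_sigma_finite_def lborel.sigma_finite_measure_axioms)
  ultimately show ?thesis
    using pair_sigma_finite.AE_pair_measure[where P = good] unfolding good_def by blast
qed

lemma strict_mono_bracket:
  fixes L :: "nat \<Rightarrow> nat"
  assumes "strict_mono L" "L M \<le> n"
  shows "\<exists>m\<ge>M. L m \<le> n \<and> n < L (Suc m)"
proof -
  have "\<forall>m. L m \<le> n \<longrightarrow> m \<le> n"
    using strict_mono_imp_increasing[OF assms(1)] order_trans by blast
  then obtain m where m: "L m \<le> n" "\<forall>k. L k \<le> n \<longrightarrow> k \<le> m"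
    using Nat.ex_has_greatest_nat[of "\<lambda>k. L k \<le> n" M n] assms(2) by blast
  then show ?thesis using assms(2) by (intro exI[of _ m]) (auto dest: spec[of _ "Suc m"])
qed

definition threshold :: "(nat \<Rightarrow> real) \<Rightarrow> real \<Rightarrow> nat \<Rightarrow> nat" where
  "threshold s c N = (SOME T. N < T \<and> (\<forall>n\<ge>T. c * real n \<le> s n))"

text \<open>
  The factor \<open>denom s k * (k + 1) * 4 ^ (k + 3)\<close> makes \<open>s n \<ge> (k + 1) * 2 ^ (k + 3) * denom s (k + 1)\<close>
  from the start of block \<open>k + 1\<close> on (\<open>block_start_le_imp_s_ge\<close>).
\<close>

primrec denom :: "(nat \<Rightarrow> real) \<Rightarrow> nat \<Rightarrow> nat" where
  "denom s 0 = 1"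
| "denom s (Suc k) =
     threshold s (real (denom s k * (k + 1) * 4 ^ (k + 3))) (denom s k) * denom s k * 2 ^ (k + 3)"

fun block_start :: "(nat \<Rightarrow> real) \<Rightarrow> nat \<Rightarrow> nat" where
  "block_start s 0 = 0"
| "block_start s (Suc k) = threshold s (real (denom s k * (k + 1) * 4 ^ (k + 3))) (denom s k)"

lemma denom_Suc: "denom s (Suc k) = block_start s (Suc k) * denom s k * 2 ^ (k + 3)"
  by simp

declare denom.simps(2) [simp del] block_start.simps(2) [simp del]

context
  fixes s :: "nat \<Rightarrow> real"
  assumes lim: "filterlim (\<lambda>n. s n / real n) at_top sequentially"
begin

lemma threshold_spec: "N < threshold s c N \<and> (\<forall>n\<ge>threshold s c N. c * real n \<le> s n)"
  unfolding threshold_def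
proof (rule someI_ex)
  obtain T where T: "\<And>n. n \<ge> T \<Longrightarrow> c \<le> s n / real n"
    using lim by (auto simp: filterlim_at_top eventually_sequentially)
  have "c * real n \<le> s n" if "n \<ge> max T (Suc N)" for n
    using T[of n] that by (simp add: field_simps)
  then show "\<exists>T. N < T \<and> (\<forall>n\<ge>T. c * real n \<le> s n)" by (intro exI[of _ "max T (Suc N)"]) auto
qed

lemma denom_less_block_start: "denom s k < block_start s (Suc k)"
  using threshold_spec by (simp add: block_start.simps)

lemma block_start_le_imp_s_ge:
  assumes "block_start s (Suc k) \<le> n"
  shows "real (Suc k) * 2 ^ (k + 3) * real (denom s (Suc k)) \<le> s n"
proof -
  have four: "(4::real) ^ (k + 3) = 2 ^ (k + 3) * 2 ^ (k + 3)" by (simp flip: power_mult_distrib)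
  have "real (Suc k) * 2 ^ (k + 3) * real (denom s (Suc k))
      = real (denom s k * (k + 1) * 4 ^ (k + 3)) * real (block_start s (Suc k))"
    unfolding denom_Suc of_nat_mult of_nat_power of_nat_numeral four by (simp add: mult_ac)
  also have "\<dots> \<le> real (denom s k * (k + 1) * 4 ^ (k + 3)) * real n"
    using assms by (intro mult_left_mono) auto
  also have "\<dots> \<le> s n"
    using threshold_spec assms by (simp add: block_start.simps)
  finally show ?thesis .
qed

lemma lacunary_denom: "lacunary_divisor_chain (denom s)"
proof
  show "denom s k dvd denom s (Suc k)" for k by (simp add: denom_Suc)
  show "2 ^ Suc k * denom s k \<le> denom s (Suc k)" for k
  proof -
    have "2 ^ Suc k * denom s k \<le> block_start s (Suc k) * (2 ^ (k + 3) * denom s k)"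
      using denom_less_block_start[of k] by (simp add: power_add)
    then show ?thesis by (simp add: denom_Suc mult_ac)
  qed
qed simp

interpretation denom: lacunary_divisor_chain "denom s"
  by (rule lacunary_denom)

lemma strict_mono_block_start: "strict_mono (block_start s)"
proof (rule strict_monoI_Suc)
  fix k
  have "block_start s k \<le> denom s k"
    using denom.pos[of "k - 1"] by (cases k) (auto simp: denom_Suc)
  then show "block_start s k < block_start s (Suc k)"
    using denom_less_block_start[of k] by simp
qed

lemma block_lower_bound:
  assumes n: "block_start s (Suc k) \<le> n" "n < block_start s (Suc (Suc k))"
    and z: "1 / 2 ^ (k + 2) \<le> circ_norm (real (denom s (Suc k)) * z)"
  shows "real (Suc k) \<le> s n * circ_norm (z + real n * denom.sum_recip)"
proof -
  define Q where "Q = real (denom s (Suc k))"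
  define L where "L = real (block_start s (Suc (Suc k)))"
  have Q: "Q > 0" using denom.pos unfolding Q_def by simp
  have L: "L > 0" using n(2) unfolding L_def by simp
  have denom_eq: "real (denom s (Suc (Suc k))) = L * Q * 2 ^ (k + 4)"
    unfolding L_def Q_def denom_Suc[of s "Suc k"] by simp
  have "2 * real n / real (denom s (Suc (Suc k))) \<le> 2 * L / (L * Q * 2 ^ (k + 4))"
    unfolding denom_eq using n(2) L Q by (intro divide_right_mono) (auto simp: L_def)
  also have "\<dots> = 1 / (Q * 2 ^ (k + 3))"
    using L by (simp add: field_simps power_add)
  finally have "2 * real n / real (denom s (Suc (Suc k))) \<le> 1 / (Q * 2 ^ (k + 3))" .
  moreover have "1 / (Q * 2 ^ (k + 2)) \<le> circ_norm (Q * z) / Q"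
    using divide_right_mono[OF z, of Q] Q unfolding Q_def[symmetric] by (simp add: mult.commute)
  ultimately have "1 / (Q * 2 ^ (k + 2)) - 1 / (Q * 2 ^ (k + 3))
      \<le> circ_norm (z + real n * denom.sum_recip)"
    using denom.circ_norm_add_mult_sum_recip_ge[of "Suc k" z n] unfolding Q_def[symmetric] by linarith
  then have approx: "1 / (Q * 2 ^ (k + 3)) \<le> circ_norm (z + real n * denom.sum_recip)"
    using Q by (simp add: field_simps power_add)
  have sn: "real (Suc k) * 2 ^ (k + 3) * Q \<le> s n"
    unfolding Q_def by (rule block_start_le_imp_s_ge[OF n(1)])
  have "real (Suc k) = (real (Suc k) * 2 ^ (k + 3) * Q) * (1 / (Q * 2 ^ (k + 3)))"
    using Q by simp
  also have "\<dots> \<le> s n * circ_norm (z + real n * denom.sum_recip)"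
    using sn approx Q order_trans[OF _ sn] by (intro mult_mono) auto
  finally show ?thesis .
qed

lemma filterlim_scaled_circ_norm_at_top:
  assumes "\<forall>\<^sub>F m in sequentially. 1 / 2 ^ (m + 1) \<le> circ_norm (real (denom s m) * z)"
  shows "filterlim (\<lambda>n. s n * circ_norm (z + real n * denom.sum_recip)) at_top sequentially"
  unfolding filterlim_at_top
proof
  fix r :: real
  obtain K where K: "\<And>m. m \<ge> K \<Longrightarrow> 1 / 2 ^ (m + 1) \<le> circ_norm (real (denom s m) * z)"
    using assms by (auto simp: eventually_sequentially)
  define M where "M = Suc (max K (nat \<lceil>r\<rceil>))"
  show "\<forall>\<^sub>F n in sequentially. r \<le> s n * circ_norm (z + real n * denom.sum_recip)"
    unfolding eventually_sequentially
  proof (intro exI allI impI)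
    fix n assume "block_start s M \<le> n"
    then obtain m where m: "M \<le> m" "block_start s m \<le> n" "n < block_start s (Suc m)"
      using strict_mono_bracket[OF strict_mono_block_start] by blast
    then obtain k where k: "m = Suc k" unfolding M_def by (cases m) auto
    have "r \<le> real m" using m(1) unfolding M_def by linarith
    also have "\<dots> \<le> s n * circ_norm (z + real n * denom.sum_recip)"
      using block_lower_bound[of k n z] m K[of m] k unfolding M_def by simp
    finally show "r \<le> s n * circ_norm (z + real n * denom.sum_recip)" .
  qed
qed

end

theorem theorem4p7:
  fixes s :: "nat \<Rightarrow> real"
  assumes "\<And>n. n \<ge> 1 \<Longrightarrow> s n > 0"
    and "filterlim (\<lambda>n. s n / real n) at_top sequentially"
  shows "\<exists>\<beta>::real. \<beta> \<notin> \<rat> \<and>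
    (AE p in (lborel \<Otimes>\<^sub>M lborel).
       p \<in> {0..<1} \<times> {0..<1} \<longrightarrow>
       liminf (\<lambda>n. ereal (s n * circ_norm (((rot \<beta>) ^^ n) (fst p) - snd p))) = \<infinity>)"
proof -
  interpret denom: lacunary_divisor_chain "denom s"
    using assms(2) by (rule lacunary_denom)
  have "summable (\<lambda>m. (1/2::real) * (1/2) ^ m)"
    by (intro summable_mult summable_geometric) simp
  then have "AE p in lborel \<Otimes>\<^sub>M lborel. \<forall>\<^sub>F m in sequentially.
      \<bar>fst p - snd p\<bar> < 1 \<longrightarrow> 1 / 2 ^ (m + 1) \<le> circ_norm (real (denom s m) * (fst p - snd p))"
    by (intro AE_eventually_circ_norm_ge) (auto simp: denom.pos power_divide)
  then have "AE p in lborel \<Otimes>\<^sub>M lborel. p \<in> {0..<1} \<times> {0..<1} \<longrightarrow>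
      liminf (\<lambda>n. ereal (s n * circ_norm (((rot denom.sum_recip) ^^ n) (fst p) - snd p))) = \<infinity>"
  proof (rule eventually_mono, intro impI)
    fix p :: "real \<times> real"
    assume "\<forall>\<^sub>F m in sequentially. \<bar>fst p - snd p\<bar> < 1 \<longrightarrow>
        1 / 2 ^ (m + 1) \<le> circ_norm (real (denom s m) * (fst p - snd p))"
      and "p \<in> {0..<1} \<times> {0..<1}"
    then have "filterlim (\<lambda>n. s n * circ_norm (fst p - snd p + real n * denom.sum_recip)) at_top sequentially"
      by (intro filterlim_scaled_circ_norm_at_top[OF assms(2)]) (auto simp: mem_Times_iff elim: eventually_mono)
    then show "liminf (\<lambda>n. ereal (s n * circ_norm (((rot denom.sum_recip) ^^ n) (fst p) - snd p))) = \<infinity>"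
      by (simp add: circ_norm_rot_funpow Liminf_PInfty flip: tendsto_PInfty_eq_at_top)
  qed
  then show ?thesis using denom.sum_recip_irrational by blast
qed

end
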